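(* For any $\theta=(B,\Omega)$ and $\psi_i=(m_i,s_i)$, the inverse of the Hessian of $J_i$ with respect to $\psi_i$ is $(\nabla_{\psi_i\psi_i}J_i)^{-1}(\theta,\psi_i)=-\begin{pmatrix}D_{\tilde a_i}^{-1/2}&\\&D_{\tilde a_i}^{-1/2}\end{pmatrix}\begin{pmatrix}C_i&-C_iD_{s_i}\Lambda_i\\-\Lambda_iD_{s_i}C_i&\Lambda_i+\Lambda_iD_{s_i}C_iD_{s_i}\Lambda_i\end{pmatrix}\begin{pmatrix}D_{\tilde a_i}^{-1/2}&\\&D_{\tilde a_i}^{-1/2}\end{pmatrix}$, where $\Lambda_i=\big(I_p+D_{s_i}^2(D_{\tilde a_i}+D_{\tilde a_i}D_{s_i}^2+\Omega_D)\big)^{-1}D_{\tilde a_i}D_{s_i}^2$ and $C_i=\big(I_p+D_{\tilde a_i}^{-1/2}\Omega D_{\tilde a_i}^{-1/2}-D_{s_i}\Lambda_iD_{s_i}\big)^{-1}$.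
   Context: PLN model, observation $i$ with counts $Y_i\in\mathbb N^p$, covariate $x_i\in\mathbb R^m$, offset $o_i\in\mathbb R^p$; $B\in\mathcal M_{m,p}(\mathbb R)$ (columns $B_j$), $\Omega$ symmetric positive definite. Variational parameter $\psi_i=(m_i,s_i)\in\mathbb R^p\times(0,\infty)^p$ (ordered as $(m_i,s_i)$ in the Hessian). Single-observation ELBO: $J_i(\theta,\psi_i)=Y_i^\top(o_i+m_i+B^\top x_i)-\tilde a_i^\top1_p-\sum_j\log(Y_{ij}!)+\frac12\log|\Omega|-\frac12m_i^\top\Omega m_i-\frac12\mathrm{diag}(\Omega)^\top s_i^2+\sum_j\log s_{ij}+\frac p2$, $\tilde a_{ij}=\exp(o_{ij}+x_i^\top B_j+m_{ij}+s_{ij}^2/2)$. Notation: $D_v=\mathrm{Diag}(v)$, $\Omega_D=I_p\odot\Omega$ (diagonal part of $\Omega$). *)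

theory Defs
  imports "HOL-Analysis.Analysis"
begin

definition sym_pos_def :: "real^'p^'p \<Rightarrow> bool" where
  "sym_pos_def A \<longleftrightarrow> transpose A = A \<and> (\<forall>v. v \<noteq> 0 \<longrightarrow> v \<bullet> (A *v v) > 0)"

definition Dg :: "real^'p \<Rightarrow> real^'p^'p" where
  "Dg v = (\<chi> i j. if i = j then v $ i else 0)"

definition diagpart :: "real^'p^'p \<Rightarrow> real^'p^'p" where
  "diagpart A = (\<chi> i j. if i = j then A $ i $ j else 0)"

text \<open>The variational parameter psi = (m, s) as one vector indexed by 'p + 'p,
  the m-block on Inl indices, the s-block on Inr indices.\<close>
definition psi :: "real^'p \<Rightarrow> real^'p \<Rightarrow> real^('p + 'p)" where
  "psi m s = (\<chi> k. case k of Inl j \<Rightarrow> m $ j | Inr j \<Rightarrow> s $ j)"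

definition mpart :: "real^('p + 'p) \<Rightarrow> real^'p" where
  "mpart v = (\<chi> j. v $ Inl j)"

definition spart :: "real^('p + 'p) \<Rightarrow> real^'p" where
  "spart v = (\<chi> j. v $ Inr j)"

definition block :: "real^'p^'p \<Rightarrow> real^'p^'p \<Rightarrow> real^'p^'p \<Rightarrow> real^'p^'p \<Rightarrow> real^('p+'p)^('p+'p)" where
  "block A B C D = (\<chi> k l. case k of
      Inl i \<Rightarrow> (case l of Inl j \<Rightarrow> A $ i $ j | Inr j \<Rightarrow> B $ i $ j)
    | Inr i \<Rightarrow> (case l of Inl j \<Rightarrow> C $ i $ j | Inr j \<Rightarrow> D $ i $ j))"

text \<open>a tilde: exp(o_j + x^T B_j + m_j + s_j^2/2).  B is m x p (B $ k $ j, row k, column j).\<close>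
definition atilde :: "real^'m \<Rightarrow> real^'p \<Rightarrow> real^'p^'m \<Rightarrow> real^'p \<Rightarrow> real^'p \<Rightarrow> real^'p" where
  "atilde x off B m s = (\<chi> j. exp (off $ j + (transpose B *v x) $ j + m $ j + (s $ j)^2 / 2))"

definition J_elbo :: "nat^'p \<Rightarrow> real^'m \<Rightarrow> real^'p \<Rightarrow> real^'p^'m \<Rightarrow> real^'p^'p \<Rightarrow> real^('p+'p) \<Rightarrow> real" where
  "J_elbo Y x off B \<Omega> v =
    (let m = mpart v; s = spart v; Yr = (\<chi> j. real (Y $ j)) in
      Yr \<bullet> (off + m + transpose B *v x)
      - (\<Sum>j\<in>UNIV. atilde x off B m s $ j)
      - (\<Sum>j\<in>UNIV. ln (fact (Y $ j)))
      + ln (det \<Omega>) / 2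
      - (m \<bullet> (\<Omega> *v m)) / 2
      - (\<Sum>j\<in>UNIV. \<Omega> $ j $ j * (s $ j)^2) / 2
      + (\<Sum>j\<in>UNIV. ln (s $ j))
      + real CARD('p) / 2)"

definition partial_deriv :: "(real^'n \<Rightarrow> real) \<Rightarrow> 'n \<Rightarrow> real^'n \<Rightarrow> real" where
  "partial_deriv f k v = deriv (\<lambda>t. f (v + t *\<^sub>R axis k 1)) 0"

definition hessian :: "(real^'n \<Rightarrow> real) \<Rightarrow> real^'n \<Rightarrow> real^'n^'n" where
  "hessian f v = (\<chi> k l. partial_deriv (partial_deriv f l) k v)"

end

(* Differentiating the gradient (Y - a - Omega m, 1/s - s a - diag(Omega) s) once more gives the
   Hessian -[[D_a + Omega, D_(a s)], [D_(a s), D_e]] with e = a s^2 + a + diag(Omega) + 1/s^2.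
   Conjugating by diag(D_a^(1/2), D_a^(1/2)) turns it into
   -[[I + D_a^(-1/2) Omega D_a^(-1/2), D_s], [D_s, Lambda^(-1)]], whose lower right block is the
   diagonal matrix Lambda^(-1) = (I + D_s^2 (D_a + D_a D_s^2 + Omega_D)) (D_a D_s^2)^(-1).
   Block elimination of that block yields the stated inverse; the Schur complement
   C^(-1) = I + D_a^(-1/2) Omega D_a^(-1/2) - D_s Lambda D_s is positive definite, hence invertible,
   since D_s Lambda D_s is diagonal with entries a s^4 / (1 + s^2 (a + a s^2 + Omega_jj)) < 1. *)

theory Submission
  imports Defs
begin

section \<open>Diagonal, inverse and block matrices\<close>

lemma Dg_nth [simp]: "Dg u $ i $ j = (if i = j then u $ i else 0)"
  by (simp add: Dg_def)

lemma Dg_mult_vec [simp]: "(Dg u *v y) $ i = u $ i * y $ i"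
  by (simp add: matrix_vector_mult_def if_distrib if_distribR cong: if_cong)

lemma Dg_mult_matrix [simp]: "(Dg u ** A) $ i $ j = u $ i * A $ i $ j"
  by (simp add: matrix_matrix_mult_def if_distrib if_distribR cong: if_cong)

lemma Dg_mult_Dg: "Dg u ** Dg w = Dg (\<chi> i. u $ i * w $ i)"
  by (simp add: vec_eq_iff)

lemma Dg_add: "Dg u + Dg w = Dg (u + w)"
  by (simp add: vec_eq_iff)

lemma mat_1_eq_Dg: "mat 1 = Dg (\<chi> i. 1)"
  by (simp add: vec_eq_iff mat_def)

lemma Dg_eq_iff: "Dg u = Dg w \<longleftrightarrow> u = w"
  by (auto simp: vec_eq_iff dest: spec2)

lemma diagpart_eq_Dg: "diagpart A = Dg (\<chi> j. A $ j $ j)"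
  by (simp add: vec_eq_iff diagpart_def)

lemma matrix_mul_lzero [simp]: "0 ** A = 0"
  and matrix_mul_rzero [simp]: "A ** 0 = 0"
  for A :: "'a::semiring_1^'n^'n"
  by (simp_all add: matrix_matrix_mult_def vec_eq_iff)

lemma matrix_add_rdistrib: "(A + B) ** C = A ** C + B ** C"
  and matrix_diff_rdistrib: "(A - B) ** C = A ** C - B ** C"
  and matrix_mul_uminus_right: "A ** (- B) = - (A ** B)"
  and matrix_mul_uminus_left: "(- A) ** B = - (A ** B)"
  for A B C :: "'a::ring_1^'n^'n"
  by (simp_all add: matrix_matrix_mult_def vec_eq_iff sum.distrib sum_subtractf sum_negf algebra_simps)

lemma uminus_matrix_vector_mult: "(- A) *v x = - (A *v x)" for A :: "'a::ring_1^'n^'m"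
  using matrix_vector_mult_diff_rdistrib[of 0 A x] by simp

lemma matrix_inv_eqI:
  fixes A B :: "'a::field^'n^'n"
  assumes "A ** B = mat 1"
  shows "matrix_inv A = B"
proof -
  have BA: "B ** A = mat 1"
    using assms by (simp add: matrix_left_right_inverse)
  have inv: "A ** matrix_inv A = mat 1 \<and> matrix_inv A ** A = mat 1"
    unfolding matrix_inv_def by (rule someI[of _ B]) (simp add: assms BA)
  then have "matrix_inv A = matrix_inv A ** (A ** B)" using assms by simp
  also have "\<dots> = B" using inv by (simp add: matrix_mul_assoc)
  finally show ?thesis .
qed

lemma matrix_inv_Dg:
  assumes "\<And>i. d $ i \<noteq> 0"
  shows "matrix_inv (Dg d) = Dg (\<chi> i. 1 / d $ i)"
  by (rule matrix_inv_eqI) (simp add: Dg_mult_Dg mat_1_eq_Dg Dg_eq_iff vec_eq_iff assms)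

lemma matrix_inv_uminus_congruence:
  fixes P P' N M :: "'a::field^'n^'n"
  assumes "P ** P' = mat 1" and "N ** M = mat 1"
  shows "matrix_inv (- (P ** N ** P)) = - (P' ** M ** P')"
proof (rule matrix_inv_eqI)
  have "X ** P ** P' = X" and "X ** N ** M = X" for X :: "'a^'n^'n"
    using assms by (simp_all flip: matrix_mul_assoc)
  then show "- (P ** N ** P) ** - (P' ** M ** P') = mat 1"
    using assms(1) by (simp add: matrix_mul_uminus_left matrix_mul_uminus_right matrix_mul_assoc)
qed

lemma matrix_mult_matrix_inv_of_pos_quadratic_form:
  fixes A :: "real^'n::finite^'n"
  assumes pos: "\<And>y. y \<noteq> 0 \<Longrightarrow> 0 < y \<bullet> (A *v y)"
  shows "A ** matrix_inv A = mat 1"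
proof -
  have "\<forall>y. A *v y = 0 \<longrightarrow> y = 0" using pos by fastforce
  then obtain B where "B ** A = mat 1" using matrix_left_invertible_ker by blast
  then have "A ** B = mat 1" using matrix_left_right_inverse by blast
  then show ?thesis using matrix_inv_eqI by metis
qed

lemma inner_mult_vec_symmetric:
  fixes A :: "real^'n::finite^'n"
  assumes "transpose A = A"
  shows "u \<bullet> (A *v v) = (A *v u) \<bullet> v"
proof -
  have "u v* A = A *v u"
    using vector_transpose_matrix[of u A] assms by simp
  then show ?thesis
    by (simp flip: dot_lmul_matrix)
qed

lemma sym_pos_def_diag_pos:
  assumes "sym_pos_def \<Omega>"
  shows "0 < \<Omega> $ j $ j"
proof -
  have "0 < axis j 1 \<bullet> (\<Omega> *v axis j 1)"
    using assms by (simp add: sym_pos_def_def axis_eq_0_iff)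
  then show ?thesis
    by (simp add: matrix_vector_mult_basis column_def inner_axis')
qed

lemma inner_mat_1_plus_congruence_minus_Dg_pos:
  fixes \<Omega> :: "real^'n::finite^'n"
  assumes psd: "\<And>v. 0 \<le> v \<bullet> (\<Omega> *v v)" and c: "\<And>i. c $ i < 1" and "y \<noteq> 0"
  shows "0 < y \<bullet> ((mat 1 + Dg d ** \<Omega> ** Dg d - Dg c) *v y)"
proof -
  define z where "z = Dg d *v y"
  have "y \<bullet> (Dg d *v w) = z \<bullet> w" for w
    by (simp add: z_def inner_vec_def mult_ac)
  then have "y \<bullet> ((mat 1 + Dg d ** \<Omega> ** Dg d - Dg c) *v y) = y \<bullet> y - y \<bullet> (Dg c *v y) + z \<bullet> (\<Omega> *v z)"
    by (simp add: z_def algebra_simps inner_add_right inner_diff_right flip: matrix_vector_mul_assoc)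
  also have "y \<bullet> y - y \<bullet> (Dg c *v y) = (\<Sum>i\<in>UNIV. (1 - c $ i) * (y $ i)\<^sup>2)"
    by (simp add: inner_vec_def power2_eq_square algebra_simps sum_subtractf)
  finally have "y \<bullet> ((mat 1 + Dg d ** \<Omega> ** Dg d - Dg c) *v y)
      = (\<Sum>i\<in>UNIV. (1 - c $ i) * (y $ i)\<^sup>2) + z \<bullet> (\<Omega> *v z)" .
  moreover obtain i where "y $ i \<noteq> 0" using \<open>y \<noteq> 0\<close> by (auto simp: vec_eq_iff)
  then have "0 < (\<Sum>i\<in>UNIV. (1 - c $ i) * (y $ i)\<^sup>2)"
    using c by (intro sum_pos2[where i=i]) (auto simp: less_imp_le)
  ultimately show ?thesis using psd[of z] by linarith
qed

lemma mpart_nth [simp]: "mpart v $ j = v $ Inl j"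
  by (simp add: mpart_def)

lemma spart_nth [simp]: "spart v $ j = v $ Inr j"
  by (simp add: spart_def)

lemma psi_nth_Inl [simp]: "psi m s $ Inl j = m $ j"
  and psi_nth_Inr [simp]: "psi m s $ Inr j = s $ j"
  by (simp_all add: psi_def)

lemma mpart_psi [simp]: "mpart (psi m s) = m"
  and spart_psi [simp]: "spart (psi m s) = s"
  by (simp_all add: vec_eq_iff)

lemma sum_UNIV_sum_type:
  "sum f (UNIV :: ('a::finite + 'b::finite) set) = (\<Sum>i\<in>UNIV. f (Inl i)) + (\<Sum>j\<in>UNIV. f (Inr j))"
  using sum.Plus[of "UNIV :: 'a set" "UNIV :: 'b set" f] by (simp add: o_def)

lemma inner_psi: "psi u w \<bullet> h = u \<bullet> mpart h + w \<bullet> spart h"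
  by (simp add: inner_vec_def sum_UNIV_sum_type)

lemma block_nth [simp]:
  "block A B C D $ Inl i $ Inl j = A $ i $ j" "block A B C D $ Inl i $ Inr j = B $ i $ j"
  "block A B C D $ Inr i $ Inl j = C $ i $ j" "block A B C D $ Inr i $ Inr j = D $ i $ j"
  by (simp_all add: block_def)

lemma block_mult_vec_nth [simp]:
  "(block A B C D *v h) $ Inl i = (A *v mpart h + B *v spart h) $ i"
  "(block A B C D *v h) $ Inr i = (C *v mpart h + D *v spart h) $ i"
  by (simp_all add: matrix_vector_mult_def sum_UNIV_sum_type)

lemma sum_type_matrix_eqI:
  fixes M N :: "'a^('p::finite + 'p)^('p + 'p)"
  assumes "\<And>i j. M $ Inl i $ Inl j = N $ Inl i $ Inl j" "\<And>i j. M $ Inl i $ Inr j = N $ Inl i $ Inr j"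
    "\<And>i j. M $ Inr i $ Inl j = N $ Inr i $ Inl j" "\<And>i j. M $ Inr i $ Inr j = N $ Inr i $ Inr j"
  shows "M = N"
  unfolding vec_eq_iff by (metis assms sum.exhaust)

lemma block_mult:
  "block A B C D ** block E F G H
    = block (A ** E + B ** G) (A ** F + B ** H) (C ** E + D ** G) (C ** F + D ** H)"
  by (rule sum_type_matrix_eqI) (simp_all add: matrix_matrix_mult_def sum_UNIV_sum_type)

lemma block_mat_1: "block (mat 1) 0 0 (mat 1) = mat 1"
  by (rule sum_type_matrix_eqI) (simp_all add: mat_def)

lemma block_inverse_Schur:
  fixes A B C D L S :: "real^'n::finite^'n"
  assumes DL: "D ** L = mat 1" and Schur: "(A - B ** L ** C) ** S = mat 1"
  shows "block A B C D ** block S (- (S ** B ** L)) (- (L ** C ** S)) (L + L ** C ** S ** B ** L)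
    = mat 1"
proof -
  have "A ** S = (A - B ** L ** C) ** S + B ** L ** C ** S"
    by (simp add: matrix_diff_rdistrib)
  then have AS: "A ** S = mat 1 + B ** L ** C ** S"
    by (simp only: Schur)
  have DLX: "D ** L ** X = X" for X :: "real^'n^'n"
    using DL by simp
  have "A ** S + B ** - (L ** C ** S) = mat 1"
    by (simp add: AS matrix_mul_uminus_right matrix_mul_assoc)
  moreover have "A ** - (S ** B ** L) + B ** (L + L ** C ** S ** B ** L) = 0"
    by (simp add: matrix_mul_uminus_right matrix_add_ldistrib matrix_mul_assoc AS matrix_add_rdistrib)
  moreover have "C ** S + D ** - (L ** C ** S) = 0"
    by (simp add: matrix_mul_uminus_right matrix_mul_assoc DLX)
  moreover have "C ** - (S ** B ** L) + D ** (L + L ** C ** S ** B ** L) = mat 1"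
    by (simp add: matrix_mul_uminus_right matrix_add_ldistrib matrix_mul_assoc DLX DL)
  ultimately show ?thesis
    by (simp add: block_mult block_mat_1)
qed

section \<open>Hessians from gradients\<close>

lemma partial_deriv_eq:
  assumes "(f has_derivative f') (at v)"
  shows "partial_deriv f k v = f' (axis k 1)"
proof -
  have "((\<lambda>t. f (v + t *\<^sub>R axis k 1)) has_derivative (\<lambda>t. f' (t *\<^sub>R axis k 1))) (at 0)"
  proof (rule has_derivative_compose[of "\<lambda>t. v + t *\<^sub>R axis k 1", unfolded o_def])
    show "((\<lambda>t. v + t *\<^sub>R axis k 1) has_derivative (\<lambda>t. t *\<^sub>R axis k 1)) (at 0)"
      by (auto intro!: derivative_eq_intros)
  qed (simp add: assms)
  moreover have "(\<lambda>t. f' (t *\<^sub>R axis k 1)) = (*) (f' (axis k 1))"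
    using assms has_derivative_linear linear_scale by fastforce
  ultimately have "((\<lambda>t. f (v + t *\<^sub>R axis k 1)) has_real_derivative f' (axis k 1)) (at 0)"
    by (simp add: has_field_derivative_def)
  then show ?thesis unfolding partial_deriv_def by (rule DERIV_imp_deriv)
qed

lemma hessian_eq_transpose_gradient_derivative:
  fixes f :: "real^'n::finite \<Rightarrow> real" and g :: "real^'n \<Rightarrow> real^'n"
  assumes "open S" "v \<in> S"
    and gradient: "\<And>w. w \<in> S \<Longrightarrow> (f has_derivative (\<lambda>h. g w \<bullet> h)) (at w)"
    and jacobian: "\<And>l. ((\<lambda>w. g w $ l) has_derivative (\<lambda>h. (H *v h) $ l)) (at v)"
  shows "hessian f v = transpose H"
proof -
  have "partial_deriv f l w = g w $ l" if "w \<in> S" for l w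
    using partial_deriv_eq[OF gradient[OF that]] by (simp add: inner_axis)
  then have "(partial_deriv f l has_derivative (\<lambda>h. (H *v h) $ l)) (at v)" for l
    using has_derivative_transform_within_open[OF jacobian \<open>open S\<close> \<open>v \<in> S\<close>] by metis
  from partial_deriv_eq[OF this] show ?thesis
    by (simp add: hessian_def vec_eq_iff matrix_vector_mult_basis column_def transpose_def)
qed

section \<open>Gradient and Hessian of the ELBO\<close>

lemma bounded_linear_mpart: "bounded_linear mpart"
  and bounded_linear_spart: "bounded_linear spart"
  by (auto intro!: linear_conv_bounded_linear[THEN iffD1] linearI simp: vec_eq_iff)

lemmas has_derivative_mpart [derivative_intros] = bounded_linear.has_derivative[OF bounded_linear_mpart]

lemmas has_derivative_spart [derivative_intros] = bounded_linear.has_derivative[OF bounded_linear_spart]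

lemma has_derivative_atilde_nth [derivative_intros]:
  "((\<lambda>w. atilde x off B (mpart w) (spart w) $ j) has_derivative
     (\<lambda>h. (h $ Inl j + w $ Inr j * h $ Inr j) * atilde x off B (mpart w) (spart w) $ j)) (at w)"
  unfolding atilde_def
  by (auto intro!: derivative_eq_intros bounded_linear.has_derivative[OF bounded_linear_vec_nth]
      simp: algebra_simps)

(* Declared only after has_derivative_atilde_nth: otherwise derivative_eq_intros would split
   atilde x off B (mpart w) (spart w) $ j into a vector derivative it cannot compute. *)
lemmas has_derivative_vec_nth [derivative_intros] = bounded_linear.has_derivative[OF bounded_linear_vec_nth]

lemmas has_derivative_matrix_vector_mult [derivative_intros] =
  bounded_linear.has_derivative[OF matrix_vector_mul_bounded_linear]

lemma open_positive_spart: "open {w :: real^('p::finite + 'p). \<forall>j. 0 < w $ Inr j}"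
proof -
  have "{w :: real^('p + 'p). \<forall>j. 0 < w $ Inr j} = (\<Inter>j. {w. 0 < w $ Inr j})"
    by auto
  then show ?thesis
    by (auto intro!: open_INT open_halfspace_component_gt_cart)
qed

definition elbo_gradient ::
  "nat^'p \<Rightarrow> real^'m \<Rightarrow> real^'p \<Rightarrow> real^'p^'m \<Rightarrow> real^'p^'p \<Rightarrow> real^('p+'p) \<Rightarrow> real^('p+'p)"
where
  "elbo_gradient Y x off B \<Omega> w =
    (let m = mpart w; s = spart w; a = atilde x off B m s in
      psi ((\<chi> j. real (Y $ j)) - a - \<Omega> *v m)
          (\<chi> j. 1 / s $ j - s $ j * a $ j - \<Omega> $ j $ j * s $ j))"

lemma J_elbo_has_derivative:
  assumes "transpose \<Omega> = \<Omega>" "\<forall>j. 0 < w $ Inr j"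
  shows "(J_elbo Y x off B \<Omega> has_derivative (\<lambda>h. elbo_gradient Y x off B \<Omega> w \<bullet> h)) (at w)"
proof -
  have quadratic: "mpart w \<bullet> (\<Omega> *v mpart h) = (\<Omega> *v mpart w) \<bullet> mpart h"
    "mpart h \<bullet> (\<Omega> *v mpart w) = (\<Omega> *v mpart w) \<bullet> mpart h" for h
    by (rule inner_mult_vec_symmetric[OF assms(1)], rule inner_commute)
  show ?thesis
    unfolding J_elbo_def Let_def using assms(2)
    apply (auto intro!: derivative_eq_intros)
    apply (rule ext)
    apply (simp add: quadratic elbo_gradient_def Let_def inner_psi inner_diff_left)
    apply (simp add: inner_vec_def distrib_right left_diff_distrib sum.distrib sum_subtractf)
    apply (simp add: sum_divide_distrib inverse_eq_divide mult_ac)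
    done
qed

lemma elbo_gradient_nth_has_derivative:
  fixes w :: "real^('p::finite + 'p)" and x :: "real^'m::finite" and off :: "real^'p"
    and B :: "real^'p^'m"
  assumes "\<forall>j. 0 < w $ Inr j"
  defines "a \<equiv> atilde x off B (mpart w) (spart w)" and "s \<equiv> spart w"
  shows "((\<lambda>v. elbo_gradient Y x off B \<Omega> v $ l) has_derivative
    (\<lambda>h. (- block (Dg a + \<Omega>) (Dg (\<chi> j. a $ j * s $ j)) (Dg (\<chi> j. a $ j * s $ j))
        (Dg (\<chi> j. a $ j * (s $ j)\<^sup>2 + a $ j + \<Omega> $ j $ j + 1 / (s $ j)\<^sup>2)) *v h) $ l)) (at w)"
proof (cases l)
  case (Inl j)
  then show ?thesis
    unfolding elbo_gradient_def Let_def a_def s_def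
    apply (auto intro!: derivative_eq_intros)
    apply (simp add: fun_eq_iff uminus_matrix_vector_mult algebra_simps)
    done
next
  case (Inr j)
  have "w $ Inr j \<noteq> 0"
    using assms(1) by (metis less_irrefl)
  with Inr show ?thesis
    unfolding elbo_gradient_def Let_def a_def s_def
    apply (auto intro!: derivative_eq_intros)
    apply (simp add: fun_eq_iff uminus_matrix_vector_mult field_simps power2_eq_square)
    done
qed

lemma hessian_J_elbo:
  assumes sym: "transpose \<Omega> = \<Omega>" and s_pos: "\<forall>j. 0 < s $ j"
  shows "hessian (J_elbo Y x off B \<Omega>) (psi m s) =
    (let a = atilde x off B m s in
      - block (Dg a + \<Omega>) (Dg (\<chi> j. a $ j * s $ j)) (Dg (\<chi> j. a $ j * s $ j))
          (Dg (\<chi> j. a $ j * (s $ j)\<^sup>2 + a $ j + \<Omega> $ j $ j + 1 / (s $ j)\<^sup>2)))"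
    (is "_ = (let a = _ in ?H a)")
proof -
  define a where "a = atilde x off B m s"
  have "hessian (J_elbo Y x off B \<Omega>) (psi m s) = transpose (?H a)"
  proof (rule hessian_eq_transpose_gradient_derivative[OF open_positive_spart])
    show "((\<lambda>v. elbo_gradient Y x off B \<Omega> v $ l) has_derivative (\<lambda>h. (?H a *v h) $ l)) (at (psi m s))"
      for l
      using elbo_gradient_nth_has_derivative[where w="psi m s"] s_pos by (simp add: a_def)
  qed (use sym s_pos J_elbo_has_derivative in auto)
  also have "transpose (?H a) = ?H a"
  proof -
    have "\<Omega> $ i $ j = \<Omega> $ j $ i" for i j
      using arg_cong[of _ _ "\<lambda>A. A $ i $ j", OF sym] by (simp add: transpose_def)
    then show ?thesis
      by (intro sum_type_matrix_eqI) (simp_all add: transpose_def)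
  qed
  finally show ?thesis
    unfolding a_def Let_def .
qed

definition Lambda_diag :: "real^'p \<Rightarrow> real^'p \<Rightarrow> real^'p^'p \<Rightarrow> real^'p" where
  "Lambda_diag a s \<Omega> =
    (\<chi> j. a $ j * (s $ j)\<^sup>2 / (1 + (s $ j)\<^sup>2 * (a $ j + a $ j * (s $ j)\<^sup>2 + \<Omega> $ j $ j)))"

lemma Lambda_diag_denominator_pos:
  fixes a s :: "real^'p" and \<Omega> :: "real^'p^'p"
  assumes "0 \<le> a $ j" "0 \<le> \<Omega> $ j $ j"
  shows "0 < 1 + (s $ j)\<^sup>2 * (a $ j + a $ j * (s $ j)\<^sup>2 + \<Omega> $ j $ j)"
proof -
  have "0 \<le> a $ j + a $ j * (s $ j)\<^sup>2 + \<Omega> $ j $ j"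
    using assms by simp
  then have "0 \<le> (s $ j)\<^sup>2 * (a $ j + a $ j * (s $ j)\<^sup>2 + \<Omega> $ j $ j)"
    by (rule mult_nonneg_nonneg[OF zero_le_power2])
  then show ?thesis
    by linarith
qed

lemma Lambda_diag_pos:
  fixes a s :: "real^'p" and \<Omega> :: "real^'p^'p"
  assumes "0 < a $ j" "0 \<le> \<Omega> $ j $ j" "s $ j \<noteq> 0"
  shows "0 < Lambda_diag a s \<Omega> $ j"
  using Lambda_diag_denominator_pos[where a=a and s=s and \<Omega>=\<Omega> and j=j] assms by (simp add: Lambda_diag_def)

lemma Lambda_diag_scaled_less_1:
  fixes a s :: "real^'p" and \<Omega> :: "real^'p^'p"
  assumes "0 \<le> a $ j" "0 \<le> \<Omega> $ j $ j"
  shows "s $ j * Lambda_diag a s \<Omega> $ j * s $ j < 1"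
proof -
  have "0 \<le> (s $ j)\<^sup>2 * (a $ j + \<Omega> $ j $ j)"
    using assms by simp
  then have "a $ j * (s $ j)\<^sup>2 * (s $ j)\<^sup>2 < 1 + (s $ j)\<^sup>2 * (a $ j + a $ j * (s $ j)\<^sup>2 + \<Omega> $ j $ j)"
    by (simp add: algebra_simps)
  with Lambda_diag_denominator_pos[OF assms, of s] show ?thesis
    by (simp add: Lambda_diag_def divide_less_eq power2_eq_square mult_ac)
qed

lemma Lambda_eq_Dg_Lambda_diag:
  assumes "\<forall>j. 0 \<le> a $ j" "\<forall>j. 0 \<le> \<Omega> $ j $ j"
  shows "matrix_inv (mat 1 + Dg s ** Dg s ** (Dg a + Dg a ** Dg s ** Dg s + diagpart \<Omega>))
      ** Dg a ** Dg s ** Dg s = Dg (Lambda_diag a s \<Omega>)"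
proof -
  define p where "p = (\<chi> j. 1 + (s $ j)\<^sup>2 * (a $ j + a $ j * (s $ j)\<^sup>2 + \<Omega> $ j $ j))"
  have p_nz: "p $ j \<noteq> 0" for j
    using Lambda_diag_denominator_pos[where a=a and s=s and \<Omega>=\<Omega> and j=j] assms by (simp add: p_def)
  have diag_p: "mat 1 + Dg s ** Dg s ** (Dg a + Dg a ** Dg s ** Dg s + diagpart \<Omega>) = Dg p"
    by (simp add: p_def Dg_mult_Dg Dg_add diagpart_eq_Dg mat_1_eq_Dg Dg_eq_iff vec_eq_iff
        power2_eq_square algebra_simps)
  show ?thesis
    unfolding diag_p matrix_inv_Dg[OF p_nz]
    by (simp add: Lambda_diag_def p_def Dg_mult_Dg Dg_eq_iff vec_eq_iff power2_eq_square)
qed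

lemma block_Dg_factorization:
  fixes \<Omega> :: "real^'p::finite^'p"
  assumes a_pos: "\<forall>j. 0 < a $ j" and \<Omega>_diag: "\<forall>j. 0 \<le> \<Omega> $ j $ j" and s_nz: "\<forall>j. s $ j \<noteq> 0"
  defines "Q \<equiv> Dg (\<chi> j. sqrt (a $ j))" and "Dh \<equiv> Dg (\<chi> j. 1 / sqrt (a $ j))"
  shows "block (Dg a + \<Omega>) (Dg (\<chi> j. a $ j * s $ j)) (Dg (\<chi> j. a $ j * s $ j))
      (Dg (\<chi> j. a $ j * (s $ j)\<^sup>2 + a $ j + \<Omega> $ j $ j + 1 / (s $ j)\<^sup>2))
    = block Q 0 0 Q ** block (mat 1 + Dh ** \<Omega> ** Dh) (Dg s) (Dg s)
        (Dg (\<chi> j. 1 / Lambda_diag a s \<Omega> $ j)) ** block Q 0 0 Q"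
proof -
  have a_nz: "a $ j \<noteq> 0" for j
    using a_pos by (metis less_irrefl)
  have "Q ** (mat 1 + Dh ** \<Omega> ** Dh) ** Q = Dg a + \<Omega>"
  proof -
    have Q_Dh: "Q ** Dh = mat 1" and Dh_Q: "Dh ** Q = mat 1"
      by (simp_all add: Q_def Dh_def Dg_mult_Dg mat_1_eq_Dg Dg_eq_iff vec_eq_iff a_nz)
    have "Q ** Q = Dg a"
      using a_pos by (simp add: Q_def Dg_mult_Dg Dg_eq_iff vec_eq_iff less_imp_le)
    moreover have "Q ** (Dh ** \<Omega> ** Dh) ** Q = \<Omega>"
      by (simp add: matrix_mul_assoc Q_Dh) (simp flip: matrix_mul_assoc add: Dh_Q)
    ultimately show ?thesis
      by (simp add: matrix_add_ldistrib matrix_add_rdistrib)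
  qed
  moreover have "Q ** Dg s ** Q = Dg (\<chi> j. a $ j * s $ j)"
    using a_pos by (simp add: Q_def Dg_mult_Dg Dg_eq_iff vec_eq_iff less_imp_le mult_ac)
  moreover have "Q ** Dg (\<chi> j. 1 / Lambda_diag a s \<Omega> $ j) ** Q
      = Dg (\<chi> j. a $ j * (s $ j)\<^sup>2 + a $ j + \<Omega> $ j $ j + 1 / (s $ j)\<^sup>2)"
    using a_pos s_nz
    by (simp add: Q_def Lambda_diag_def Dg_mult_Dg Dg_eq_iff vec_eq_iff less_imp_le a_nz
        field_simps power2_eq_square)
  ultimately show ?thesis
    by (simp add: block_mult)
qed

lemma matrix_inv_uminus_block_Dg:
  fixes \<Omega> :: "real^'p::finite^'p" and a s :: "real^'p"
  assumes pd: "sym_pos_def \<Omega>" and a_pos: "\<forall>j. 0 < a $ j" and s_pos: "\<forall>j. 0 < s $ j"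
  shows "let Ds = Dg s;
             Dh = Dg (\<chi> j. 1 / sqrt (a $ j));
             \<Lambda> = matrix_inv (mat 1 + Ds ** Ds ** (Dg a + Dg a ** Ds ** Ds + diagpart \<Omega>))
                   ** Dg a ** Ds ** Ds;
             C = matrix_inv (mat 1 + Dh ** \<Omega> ** Dh - Ds ** \<Lambda> ** Ds)
         in matrix_inv (- block (Dg a + \<Omega>) (Dg (\<chi> j. a $ j * s $ j)) (Dg (\<chi> j. a $ j * s $ j))
                (Dg (\<chi> j. a $ j * (s $ j)\<^sup>2 + a $ j + \<Omega> $ j $ j + 1 / (s $ j)\<^sup>2)))
            = - (block Dh 0 0 Dh ** block C (- (C ** Ds ** \<Lambda>)) (- (\<Lambda> ** Ds ** C))
                    (\<Lambda> + \<Lambda> ** Ds ** C ** Ds ** \<Lambda>) ** block Dh 0 0 Dh)"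
proof -
  define Dh where "Dh = Dg (\<chi> j. 1 / sqrt (a $ j))"
  define lam where "lam = Lambda_diag a s \<Omega>"
  define C where "C = matrix_inv (mat 1 + Dh ** \<Omega> ** Dh - Dg s ** Dg lam ** Dg s)"
  have a_nonneg: "\<forall>j. 0 \<le> a $ j" and \<Omega>_diag: "\<forall>j. 0 \<le> \<Omega> $ j $ j"
    using a_pos sym_pos_def_diag_pos[OF pd] by (auto simp: less_imp_le)
  have s_nz: "\<forall>j. s $ j \<noteq> 0"
    using s_pos by (metis less_irrefl)
  have "lam $ j \<noteq> 0" for j
    using Lambda_diag_pos[where a=a and s=s and \<Omega>=\<Omega> and j=j] a_pos \<Omega>_diag s_nz by (simp add: lam_def)
  then have "Dg (\<chi> j. 1 / lam $ j) ** Dg lam = mat 1"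
    by (simp add: Dg_mult_Dg mat_1_eq_Dg Dg_eq_iff vec_eq_iff)
  moreover have "(mat 1 + Dh ** \<Omega> ** Dh - Dg s ** Dg lam ** Dg s) ** C = mat 1"
    unfolding C_def
  proof (rule matrix_mult_matrix_inv_of_pos_quadratic_form)
    have "0 \<le> v \<bullet> (\<Omega> *v v)" for v
      using pd by (cases "v = 0") (auto simp: sym_pos_def_def less_imp_le)
    moreover have "(\<chi> j. s $ j * lam $ j * s $ j) $ j < 1" for j
      using Lambda_diag_scaled_less_1[where a=a and s=s and \<Omega>=\<Omega> and j=j] a_nonneg \<Omega>_diag
      by (simp add: lam_def)
    moreover have "Dg s ** Dg lam ** Dg s = Dg (\<chi> j. s $ j * lam $ j * s $ j)"
      by (simp add: Dg_mult_Dg)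
    ultimately show "0 < y \<bullet> ((mat 1 + Dh ** \<Omega> ** Dh - Dg s ** Dg lam ** Dg s) *v y)" if "y \<noteq> 0" for y
      unfolding Dh_def by (simp only:) (rule inner_mat_1_plus_congruence_minus_Dg_pos[OF _ _ that])
  qed
  moreover have "block (Dg (\<chi> j. sqrt (a $ j))) 0 0 (Dg (\<chi> j. sqrt (a $ j))) ** block Dh 0 0 Dh = mat 1"
  proof -
    have "Dg (\<chi> j. sqrt (a $ j)) ** Dh = mat 1"
      using a_pos by (simp add: Dh_def Dg_mult_Dg mat_1_eq_Dg Dg_eq_iff vec_eq_iff less_imp_neq[symmetric])
    then show ?thesis
      by (simp add: block_mult block_mat_1)
  qed
  ultimately show ?thesis
    unfolding Let_def Dh_def[symmetric] C_def[symmetric]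
      Lambda_eq_Dg_Lambda_diag[OF a_nonneg \<Omega>_diag] lam_def[symmetric]
      block_Dg_factorization[OF a_pos \<Omega>_diag s_nz, folded Dh_def lam_def]
    by (intro matrix_inv_uminus_congruence block_inverse_Schur)
qed

theorem proposition8:
  fixes Y :: "nat^'p" and x :: "real^'m" and off :: "real^'p"
    and B :: "real^'p^'m" and \<Omega> :: "real^'p^'p" and m s :: "real^'p"
  assumes "sym_pos_def \<Omega>" and "\<forall>j. s $ j > 0"
  shows "let a = atilde x off B m s;
             Ds = Dg s;
             Dh = Dg (\<chi> j. 1 / sqrt (a $ j));
             \<Lambda> = matrix_inv (mat 1 + Ds ** Ds ** (Dg a + Dg a ** Ds ** Ds + diagpart \<Omega>))
                   ** Dg a ** Ds ** Ds;
             C = matrix_inv (mat 1 + Dh ** \<Omega> ** Dh - Ds ** \<Lambda> ** Ds)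
         in matrix_inv (hessian (J_elbo Y x off B \<Omega>) (psi m s))
            = - (block Dh 0 0 Dh ** block C (- (C ** Ds ** \<Lambda>)) (- (\<Lambda> ** Ds ** C))
                    (\<Lambda> + \<Lambda> ** Ds ** C ** Ds ** \<Lambda>) ** block Dh 0 0 Dh)"
proof -
  have sym: "transpose \<Omega> = \<Omega>"
    using assms(1) by (simp add: sym_pos_def_def)
  have a_pos: "\<forall>j. 0 < atilde x off B m s $ j"
    by (simp add: atilde_def)
  from matrix_inv_uminus_block_Dg[OF assms(1) a_pos assms(2)] show ?thesis
    unfolding hessian_J_elbo[OF sym assms(2)] Let_def .
qed

end
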